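(* Let $A$ be a unital C*-algebra such that $\mathcal C(A)$ satisfies the ascending chain condition: every chain $C_1\subseteq C_2\subseteq C_3\subseteq\cdots$ in $\mathcal C(A)$ stabilizes. Then the topological space $\Sigma_\ast$ is sober (every nonempty irreducible closed subset is the closure of a unique point). In particular, $\Sigma_\ast$ is sober whenever $A$ is finite-dimensional.
   Context: Let $A$ be a unital C*-algebra. $\mathcal C(A)$ is the poset (under inclusion) of commutative C*-subalgebras of $A$ containing the unit of $A$. For $C\in\mathcal C(A)$, $\Sigma_C$ is its Gelfand spectrum; for $C\subseteq C'$ and $\lambda'\in\Sigma_{C'}$, $\lambda'|_C$ is the restriction. Let $\Sigma=\{(C,\lambda)\mid C\in\mathcal C(A),\lambda\in\Sigma_C\}$ and $U_C=\{\lambda\mid(C,\lambda)\in U\}$ for $U\subseteq\Sigma$. The space $\Sigma_\ast$ is $\Sigma$ with the topology in which $U$ is open iff (1) each $U_C$ is open in $\Sigma_C$, and (2) if $\lambda\in U_C$, $C\subseteq C'$ and $\lambda'\in\Sigma_{C'}$ with $\lambda'|_C=\lambda$, then $\lambda'\in U_{C'}$. *)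

theory Defs
  imports "HOL-Analysis.Analysis"
begin

class cstar_algebra = banach + real_normed_algebra_1 +
  fixes scaleC :: "complex \<Rightarrow> 'a \<Rightarrow> 'a"
    and adj :: "'a \<Rightarrow> 'a"
  assumes scaleC_of_real: "scaleC (of_real r) x = scaleR r x"
    and scaleC_add_right: "scaleC c (x + y) = scaleC c x + scaleC c y"
    and scaleC_add_left: "scaleC (c + d) x = scaleC c x + scaleC d x"
    and scaleC_scaleC: "scaleC c (scaleC d x) = scaleC (c * d) x"
    and scaleC_one: "scaleC 1 x = x"
    and norm_scaleC: "norm (scaleC c x) = cmod c * norm x"
    and mult_scaleC_left: "scaleC c x * y = scaleC c (x * y)"
    and mult_scaleC_right: "x * scaleC c y = scaleC c (x * y)"
    and adj_adj: "adj (adj x) = x"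
    and adj_add: "adj (x + y) = adj x + adj y"
    and adj_mult: "adj (x * y) = adj y * adj x"
    and adj_scaleC: "adj (scaleC c x) = scaleC (cnj c) (adj x)"
    and cstar_identity: "norm (adj x * x) = (norm x)\<^sup>2"

definition comm_csubalg :: "'a::cstar_algebra set \<Rightarrow> bool" where
  "comm_csubalg C \<longleftrightarrow>
     1 \<in> C \<and> closed C \<and>
     (\<forall>x\<in>C. \<forall>y\<in>C. x + y \<in> C \<and> x * y \<in> C \<and> x * y = y * x) \<and>
     (\<forall>c. \<forall>x\<in>C. scaleC c x \<in> C) \<and>
     (\<forall>x\<in>C. adj x \<in> C)"

text \<open>Characters are represented as functions in the product space
  PiE C (\<lambda>_. UNIV), i.e. extensional functions that are undefined
  outside C.\<close>

definition gelfand :: "'a::cstar_algebra set \<Rightarrow> ('a \<Rightarrow> complex) set" where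
  "gelfand C = {l \<in> extensional C.
      (\<forall>x\<in>C. \<forall>y\<in>C. l (x + y) = l x + l y \<and> l (x * y) = l x * l y) \<and>
      (\<forall>c. \<forall>x\<in>C. l (scaleC c x) = c * l x) \<and>
      (\<exists>x\<in>C. l x \<noteq> 0)}"

definition gelfand_top :: "'a::cstar_algebra set \<Rightarrow> ('a \<Rightarrow> complex) topology" where
  "gelfand_top C = subtopology (product_topology (\<lambda>_. euclidean) C) (gelfand C)"

definition Sigma_set :: "('a::cstar_algebra set \<times> ('a \<Rightarrow> complex)) set" where
  "Sigma_set = {(C, l). comm_csubalg C \<and> l \<in> gelfand C}"

definition slice :: "('a set \<times> ('a \<Rightarrow> complex)) set \<Rightarrow> 'a set \<Rightarrow> ('a \<Rightarrow> complex) set" where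
  "slice U C = {l. (C, l) \<in> U}"

definition Sigma_open :: "('a::cstar_algebra set \<times> ('a \<Rightarrow> complex)) set \<Rightarrow> bool" where
  "Sigma_open U \<longleftrightarrow> U \<subseteq> Sigma_set \<and>
     (\<forall>C. comm_csubalg C \<longrightarrow> openin (gelfand_top C) (slice U C)) \<and>
     (\<forall>C l C' l'. (C, l) \<in> U \<and> comm_csubalg C' \<and> C \<subseteq> C' \<and> l' \<in> gelfand C' \<and>
        restrict l' C = l \<longrightarrow> (C', l') \<in> U)"

lemma Sigma_openI:
  assumes "U \<subseteq> Sigma_set"
    and "\<And>C. comm_csubalg C \<Longrightarrow> openin (gelfand_top C) (slice U C)"
    and "\<And>C l C' l'. (C, l) \<in> U \<Longrightarrow> comm_csubalg C' \<Longrightarrow> C \<subseteq> C' \<Longrightarrow>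
           l' \<in> gelfand C' \<Longrightarrow> restrict l' C = l \<Longrightarrow> (C', l') \<in> U"
  shows "Sigma_open U"
  unfolding Sigma_open_def using assms by (intro conjI allI impI) (simp, simp, elim conjE, simp)

lemma Sigma_openD:
  assumes "Sigma_open U"
  shows "U \<subseteq> Sigma_set"
    and "comm_csubalg C \<Longrightarrow> openin (gelfand_top C) (slice U C)"
    and "(C, l) \<in> U \<Longrightarrow> comm_csubalg C' \<Longrightarrow> C \<subseteq> C' \<Longrightarrow>
           l' \<in> gelfand C' \<Longrightarrow> restrict l' C = l \<Longrightarrow> (C', l') \<in> U"
proof -
  show "U \<subseteq> Sigma_set" using assms unfolding Sigma_open_def by (elim conjE)
  show "comm_csubalg C \<Longrightarrow> openin (gelfand_top C) (slice U C)" using assms unfolding Sigma_open_def by (elim conjE) simp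
  show "(C, l) \<in> U \<Longrightarrow> comm_csubalg C' \<Longrightarrow> C \<subseteq> C' \<Longrightarrow>
           l' \<in> gelfand C' \<Longrightarrow> restrict l' C = l \<Longrightarrow> (C', l') \<in> U"
    using assms unfolding Sigma_open_def by (elim conjE) (erule allE[of _ C], erule allE[of _ l], erule allE[of _ C'], erule allE[of _ l'], simp)
qed

lemma istopology_Sigma_open: "istopology Sigma_open"
  unfolding istopology_def
proof (intro conjI allI impI)
  fix S T :: "('a::cstar_algebra set \<times> ('a \<Rightarrow> complex)) set"
  assume S: "Sigma_open S" and T: "Sigma_open T"
  have e: "slice (S \<inter> T) C = slice S C \<inter> slice T C" for C by (auto simp: slice_def)
  show "Sigma_open (S \<inter> T)"
  proof (rule Sigma_openI)
    show "S \<inter> T \<subseteq> Sigma_set" using Sigma_openD(1)[OF S] by blast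
    show "openin (gelfand_top C) (slice (S \<inter> T) C)" if "comm_csubalg C" for C
      unfolding e by (rule openin_Int[OF Sigma_openD(2)[OF S that] Sigma_openD(2)[OF T that]])
    show "(C', l') \<in> S \<inter> T" if "(C, l) \<in> S \<inter> T" "comm_csubalg C'" "C \<subseteq> C'"
       "l' \<in> gelfand C'" "restrict l' C = l" for C l C' l'
      using Sigma_openD(3)[OF S IntD1[OF that(1)] that(2-5)] Sigma_openD(3)[OF T IntD2[OF that(1)] that(2-5)] by (rule IntI)
  qed
next
  fix K :: "('a::cstar_algebra set \<times> ('a \<Rightarrow> complex)) set set"
  assume K: "\<forall>U\<in>K. Sigma_open U"
  have e: "slice (\<Union>K) C = \<Union>((\<lambda>U. slice U C) ` K)" for C by (auto simp: slice_def)
  show "Sigma_open (\<Union>K)"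
  proof (rule Sigma_openI)
    show "\<Union>K \<subseteq> Sigma_set" using K Sigma_openD(1) by blast
    show "openin (gelfand_top C) (slice (\<Union>K) C)" if "comm_csubalg C" for C
      unfolding e using K Sigma_openD(2)[OF _ that] by (intro openin_Union) blast
    show "(C', l') \<in> \<Union>K" if "(C, l) \<in> \<Union>K" "comm_csubalg C'" "C \<subseteq> C'"
       "l' \<in> gelfand C'" "restrict l' C = l" for C l C' l'
    proof -
      from that(1) obtain U where U: "U \<in> K" "(C, l) \<in> U" by blast
      have "(C', l') \<in> U" using K U(1) by (intro Sigma_openD(3)[OF _ U(2) that(2-5)]) simp
      with U(1) show ?thesis by blast
    qed
  qed
qed

definition Sigma_star :: "('a::cstar_algebra set \<times> ('a \<Rightarrow> complex)) topology" where
  "Sigma_star = topology Sigma_open"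

lemma openin_Sigma_star: "openin Sigma_star U \<longleftrightarrow> Sigma_open U"
  by (simp add: Sigma_star_def istopology_Sigma_open)

definition irreducible_in :: "'b topology \<Rightarrow> 'b set \<Rightarrow> bool" where
  "irreducible_in T S \<longleftrightarrow> S \<noteq> {} \<and> S \<subseteq> topspace T \<and>
     (\<forall>F G. closedin T F \<and> closedin T G \<and> S \<subseteq> F \<union> G \<longrightarrow> S \<subseteq> F \<or> S \<subseteq> G)"

definition sober :: "'b topology \<Rightarrow> bool" where
  "sober T \<longleftrightarrow> (\<forall>S. closedin T S \<and> irreducible_in T S \<longrightarrow>
     (\<exists>!x. x \<in> topspace T \<and> S = T closure_of {x}))"

definition ACC_CA :: "'a::cstar_algebra itself \<Rightarrow> bool" where
  "ACC_CA _ \<longleftrightarrow> (\<forall>f :: nat \<Rightarrow> 'a set.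
     (\<forall>n. comm_csubalg (f n) \<and> f n \<subseteq> f (Suc n)) \<longrightarrow> (\<exists>N. \<forall>n\<ge>N. f n = f N))"

definition finite_dim_cstar :: "'a::cstar_algebra itself \<Rightarrow> bool" where
  "finite_dim_cstar _ \<longleftrightarrow> (\<exists>B :: 'a set. finite B \<and>
     (\<forall>x. \<exists>c. x = (\<Sum>b\<in>B. scaleC (c b) b)))"

end

theory Submission
  imports Defs
begin

text \<open>
  A space is sober as soon as it is T0 and every closed irreducible set has a
  generic point (the T0 property makes generic points unique).  Both facts are
  obtained for \<Sigma>* from two families of open sets: the set of all points
  (D, \<phi>) with C \<subseteq> D, and its subsets on which \<phi> x lies in a given open set
  of complex numbers (x \<in> C).  From them a point (C, \<phi>) in the closure of
  (D, \<mu>) satisfies C \<subseteq> D and \<mu>|C = \<phi>, which gives T0.  For a closed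
  irreducible S, the chain condition yields a maximal algebra M among the
  algebras occurring in S; irreducibility together with the Hausdorff property
  of the Gelfand spectrum forces exactly one character \<phi> with (M, \<phi>) \<in> S,
  and (M, \<phi>) is then a generic point of S.  Finally, a finite-dimensional
  algebra satisfies the chain condition because every algebra in \<C>(A) is a
  complex subspace, and chains of subspaces of a finite-dimensional space
  stabilise.
\<close>

lemma irreducible_in_meets_Int:
  assumes irr: "irreducible_in X S" and U: "openin X U" and V: "openin X V"
    and SU: "S \<inter> U \<noteq> {}" and SV: "S \<inter> V \<noteq> {}"
  shows "S \<inter> U \<inter> V \<noteq> {}"
proof
  assume disj: "S \<inter> U \<inter> V = {}"
  have "closedin X (topspace X - U)" "closedin X (topspace X - V)"
    using U V by auto
  moreover have "S \<subseteq> (topspace X - U) \<union> (topspace X - V)"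
    using disj irr unfolding irreducible_in_def by blast
  ultimately have "S \<subseteq> topspace X - U \<or> S \<subseteq> topspace X - V"
    using irr unfolding irreducible_in_def by blast
  then show False using SU SV by blast
qed

text \<open>A T0 space in which every closed irreducible set has a generic point
  is sober; T0 is exactly what makes the generic point unique.\<close>
lemma soberI_T0:
  assumes T0: "\<And>a b. a \<in> X closure_of {b} \<Longrightarrow> b \<in> X closure_of {a} \<Longrightarrow> a = b"
    and generic: "\<And>S. closedin X S \<Longrightarrow> irreducible_in X S \<Longrightarrow>
                     \<exists>x\<in>topspace X. S = X closure_of {x}"
  shows "sober X"
  unfolding sober_def
proof (intro allI impI)
  fix S assume "closedin X S \<and> irreducible_in X S"
  then obtain x where x: "x \<in> topspace X" "S = X closure_of {x}"
    using generic by blast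
  show "\<exists>!x. x \<in> topspace X \<and> S = X closure_of {x}"
  proof (rule ex1I[of _ x])
    show "x \<in> topspace X \<and> S = X closure_of {x}" using x by blast
  next
    fix y assume y: "y \<in> topspace X \<and> S = X closure_of {y}"
    then have "x \<in> X closure_of {y}" "y \<in> X closure_of {x}"
      using x closure_of_subset[of "{x}" X] closure_of_subset[of "{y}" X] by auto
    then show "y = x" using T0 by blast
  qed
qed

lemma gelfand_subset_PiE: "gelfand C \<subseteq> (\<Pi>\<^sub>E x\<in>C. UNIV)"
  by (auto simp: gelfand_def PiE_def)

lemma openin_gelfand_top_gelfand: "openin (gelfand_top C) (gelfand C)"
  unfolding gelfand_top_def using gelfand_subset_PiE by (simp add: openin_subtopology_refl)

lemma openin_gelfand_top_eval:
  assumes "x \<in> C" "open W"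
  shows "openin (gelfand_top C) {l \<in> gelfand C. l x \<in> W}"
proof -
  let ?P = "product_topology (\<lambda>_. euclidean) C"
  have "openin ?P {l \<in> topspace ?P. l x \<in> W}"
    using assms by (intro openin_continuous_map_preimage[OF continuous_map_product_projection]) auto
  moreover have "{l \<in> gelfand C. l x \<in> W} = {l \<in> topspace ?P. l x \<in> W} \<inter> gelfand C"
    using gelfand_subset_PiE by auto
  ultimately show ?thesis unfolding gelfand_top_def openin_subtopology by blast
qed

lemma gelfand_eqI:
  assumes "l \<in> gelfand C" "m \<in> gelfand C" "\<And>x. x \<in> C \<Longrightarrow> l x = m x"
  shows "l = m"
  using assms by (intro extensionalityI[of l C m]) (auto simp: gelfand_def)

lemma topspace_Sigma_star: "topspace Sigma_star = Sigma_set"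
proof (rule subset_antisym)
  show "topspace Sigma_star \<subseteq> Sigma_set"
    using Sigma_openD(1) openin_Sigma_star openin_topspace by blast
  have "Sigma_open Sigma_set"
  proof (rule Sigma_openI)
    fix C assume "comm_csubalg C"
    then have "slice Sigma_set C = gelfand C" by (auto simp: slice_def Sigma_set_def)
    then show "openin (gelfand_top C) (slice Sigma_set C)"
      using openin_gelfand_top_gelfand by simp
  qed (auto simp: Sigma_set_def)
  then show "Sigma_set \<subseteq> topspace Sigma_star"
    by (metis openin_Sigma_star openin_subset)
qed

definition upper_set :: "'a::cstar_algebra set \<Rightarrow> ('a set \<times> ('a \<Rightarrow> complex)) set" where
  "upper_set C = {(D, l) \<in> Sigma_set. C \<subseteq> D}"

definition eval_set ::
    "'a::cstar_algebra set \<Rightarrow> 'a \<Rightarrow> complex set \<Rightarrow> ('a set \<times> ('a \<Rightarrow> complex)) set" where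
  "eval_set C x W = {(D, l) \<in> Sigma_set. C \<subseteq> D \<and> l x \<in> W}"

lemma openin_upper_set: "openin Sigma_star (upper_set C)"
  unfolding openin_Sigma_star
proof (rule Sigma_openI)
  fix D :: "'a set" assume D: "comm_csubalg D"
  have "slice (upper_set C) D = (if C \<subseteq> D then gelfand D else {})"
    using D by (auto simp: slice_def upper_set_def Sigma_set_def)
  then show "openin (gelfand_top D) (slice (upper_set C) D)"
    by (simp add: openin_gelfand_top_gelfand)
qed (auto simp: upper_set_def Sigma_set_def)

lemma openin_eval_set:
  assumes x: "x \<in> C" and W: "open W"
  shows "openin Sigma_star (eval_set C x W)"
  unfolding openin_Sigma_star
proof (rule Sigma_openI)
  fix D :: "'a set" assume D: "comm_csubalg D"
  have "slice (eval_set C x W) D = (if C \<subseteq> D then {l \<in> gelfand D. l x \<in> W} else {})"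
    using D by (auto simp: slice_def eval_set_def Sigma_set_def)
  then show "openin (gelfand_top D) (slice (eval_set C x W) D)"
    using openin_gelfand_top_eval[of x D W] x W by auto
next
  fix C1 l C' l'
  assume "(C1, l) \<in> eval_set C x W" "comm_csubalg C'" "C1 \<subseteq> C'" "l' \<in> gelfand C'"
    "restrict l' C1 = l"
  then show "(C', l') \<in> eval_set C x W"
    using x by (auto simp: eval_set_def Sigma_set_def restrict_def split: if_splits)
qed (auto simp: eval_set_def Sigma_set_def)

section \<open>The specialisation order and the T0 property\<close>

lemma in_closure_of_point_Sigma_star:
  assumes cl: "(C, l) \<in> Sigma_star closure_of {(D, m)}"
  shows "C \<subseteq> D" and "\<And>x. x \<in> C \<Longrightarrow> m x = l x"
proof -
  have nbhd: "(D, m) \<in> T" if "openin Sigma_star T" "(C, l) \<in> T" for T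
    using cl that unfolding in_closure_of by blast
  have Cl: "(C, l) \<in> Sigma_set"
    using cl unfolding in_closure_of topspace_Sigma_star by blast
  show "C \<subseteq> D"
    using nbhd[OF openin_upper_set[of C]] Cl by (auto simp: upper_set_def)
  fix x assume x: "x \<in> C"
  show "m x = l x"
  proof (rule ccontr)
    assume ne: "m x \<noteq> l x"
    let ?T = "eval_set C x (ball (l x) (dist (l x) (m x)))"
    have "(C, l) \<in> ?T" using Cl ne by (simp add: eval_set_def)
    then have "(D, m) \<in> ?T" by (rule nbhd[OF openin_eval_set[OF x open_ball]])
    then show False by (simp add: eval_set_def)
  qed
qed

text \<open>\<Sigma>* is T0: points in each other's closure lie over the same algebra and
  agree on it.\<close>
lemma T0_Sigma_star:
  assumes ab: "a \<in> Sigma_star closure_of {b}" and ba: "b \<in> Sigma_star closure_of {a}"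
  shows "a = b"
proof -
  obtain C l D m where a: "a = (C, l)" and b: "b = (D, m)" by (cases a, cases b)
  have CD: "C = D"
    using in_closure_of_point_Sigma_star(1) ab ba a b by blast
  have "l \<in> gelfand C" "m \<in> gelfand C"
    using ab ba a b CD unfolding in_closure_of topspace_Sigma_star Sigma_set_def by auto
  then have "l = m"
    using in_closure_of_point_Sigma_star(2)[of C l D m] ab a b CD by (auto intro: gelfand_eqI)
  then show ?thesis using a b CD by simp
qed

section \<open>Generic points of closed irreducible sets\<close>

text \<open>Over a fixed algebra, an irreducible set contains at most one character:
  two distinct characters would be separated by disjoint evaluation sets.\<close>
lemma irreducible_in_Sigma_star_fibre_unique:
  assumes irr: "irreducible_in Sigma_star S" and lS: "(M, l) \<in> S" and mS: "(M, m) \<in> S"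
  shows "l = m"
proof (rule ccontr)
  assume ne: "l \<noteq> m"
  have SS: "S \<subseteq> Sigma_set"
    using irr unfolding irreducible_in_def topspace_Sigma_star by blast
  then have "l \<in> gelfand M" "m \<in> gelfand M" using lS mS by (auto simp: Sigma_set_def)
  then obtain x where x: "x \<in> M" "l x \<noteq> m x" using ne gelfand_eqI by blast
  define r where "r = dist (l x) (m x) / 2"
  have "r > 0" using x by (simp add: r_def)
  have "S \<inter> eval_set M x (ball (l x) r) \<inter> eval_set M x (ball (m x) r) \<noteq> {}"
  proof (rule irreducible_in_meets_Int[OF irr openin_eval_set openin_eval_set])
    show "S \<inter> eval_set M x (ball (l x) r) \<noteq> {}"
      using lS SS \<open>r > 0\<close> by (auto simp: eval_set_def)
    show "S \<inter> eval_set M x (ball (m x) r) \<noteq> {}"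
      using mS SS \<open>r > 0\<close> by (auto simp: eval_set_def)
  qed (use x in auto)
  then obtain \<nu> where "dist (l x) (\<nu> x) < r" "dist (m x) (\<nu> x) < r"
    by (auto simp: eval_set_def)
  moreover have "dist (l x) (m x) \<le> dist (l x) (\<nu> x) + dist (m x) (\<nu> x)"
    by (rule dist_triangle2)
  ultimately show False by (simp add: r_def)
qed

text \<open>A point of a closed irreducible set lying over a maximal algebra is a
  generic point: every neighbourhood of a point of S meets the neighbourhood
  upper_set M of (M, \<phi>) inside S, and by maximality and fibre uniqueness the
  common point can only be (M, \<phi>).\<close>
lemma irreducible_in_Sigma_star_generic_point:
  assumes cl: "closedin Sigma_star S" and irr: "irreducible_in Sigma_star S"
    and M\<phi>S: "(M, \<phi>) \<in> S"
    and maximal: "\<And>E \<nu>. (E, \<nu>) \<in> S \<Longrightarrow> M \<subseteq> E \<Longrightarrow> E = M"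
  shows "S = Sigma_star closure_of {(M, \<phi>)}"
proof
  show "Sigma_star closure_of {(M, \<phi>)} \<subseteq> S"
    using M\<phi>S cl by (intro closure_of_minimal) auto
  have SS: "S \<subseteq> Sigma_set" using closedin_subset[OF cl] by (simp add: topspace_Sigma_star)
  show "S \<subseteq> Sigma_star closure_of {(M, \<phi>)}"
  proof
    fix q assume q: "q \<in> S"
    show "q \<in> Sigma_star closure_of {(M, \<phi>)}"
      unfolding in_closure_of
    proof (intro conjI allI impI)
      show "q \<in> topspace Sigma_star" using q SS by (simp add: topspace_Sigma_star subsetD)
      fix T assume T: "q \<in> T \<and> openin Sigma_star T"
      have "S \<inter> T \<inter> upper_set M \<noteq> {}"
        using T q M\<phi>S SS
        by (intro irreducible_in_meets_Int[OF irr _ openin_upper_set]) (auto simp: upper_set_def)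
      then obtain E \<nu> where E: "(E, \<nu>) \<in> S" "(E, \<nu>) \<in> T" "M \<subseteq> E"
        by (auto simp: upper_set_def)
      then have "E = M" using maximal by blast
      then have "\<nu> = \<phi>" using irreducible_in_Sigma_star_fibre_unique[OF irr _ M\<phi>S] E by blast
      then show "\<exists>y. y \<in> {(M, \<phi>)} \<and> y \<in> T" using E \<open>E = M\<close> by blast
    qed
  qed
qed

lemma wf_strict_superalgebra:
  assumes acc: "ACC_CA TYPE('a::cstar_algebra)"
  shows "wf {(D, C :: 'a set). comm_csubalg C \<and> comm_csubalg D \<and> C \<subset> D}"
  unfolding wf_iff_no_infinite_down_chain
proof
  assume "\<exists>f. \<forall>i. (f (Suc i), f i) \<in> {(D, C :: 'a set). comm_csubalg C \<and> comm_csubalg D \<and> C \<subset> D}"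
  then obtain f :: "nat \<Rightarrow> 'a set"
    where down: "\<forall>i. (f (Suc i), f i) \<in> {(D, C). comm_csubalg C \<and> comm_csubalg D \<and> C \<subset> D}" ..
  have f: "comm_csubalg (f i) \<and> f i \<subset> f (Suc i)" for i
    using down by simp
  then have "\<forall>n. comm_csubalg (f n) \<and> f n \<subseteq> f (Suc n)" by blast
  then obtain N where N: "\<forall>n\<ge>N. f n = f N"
    using acc[unfolded ACC_CA_def, rule_format] by blast
  have "f (Suc N) = f N" by (rule N[rule_format]) simp
  with f[of N] show False by simp
qed

lemma ACC_CA_maximal_algebra:
  assumes acc: "ACC_CA TYPE('a::cstar_algebra)"
    and SS: "S \<subseteq> (Sigma_set :: ('a set \<times> ('a \<Rightarrow> complex)) set)" and p: "p \<in> S"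
  obtains M \<phi> where "(M, \<phi>) \<in> S" "\<And>E \<nu>. (E, \<nu>) \<in> S \<Longrightarrow> M \<subseteq> E \<Longrightarrow> E = M"
proof -
  let ?R = "{(D, C :: 'a set). comm_csubalg C \<and> comm_csubalg D \<and> C \<subset> D}"
  obtain M where "M \<in> fst ` S" and min: "\<And>E. (E, M) \<in> ?R \<Longrightarrow> E \<notin> fst ` S"
    using wfE_min[OF wf_strict_superalgebra[OF acc], of "fst p" "fst ` S"] p by blast
  then obtain \<phi> where M\<phi>: "(M, \<phi>) \<in> S" by auto
  have "E = M" if E\<nu>: "(E, \<nu>) \<in> S" and ME: "M \<subseteq> E" for E \<nu>
  proof (rule ccontr)
    assume "E \<noteq> M"
    moreover have "comm_csubalg E" "comm_csubalg M"
      using E\<nu> M\<phi> SS by (auto simp: Sigma_set_def)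
    ultimately have "E \<notin> fst ` S" using min ME by blast
    moreover have "E \<in> fst ` S" using E\<nu> by (metis fst_conv image_eqI)
    ultimately show False by contradiction
  qed
  with M\<phi> show ?thesis using that by blast
qed

theorem sober_Sigma_star_if_ACC_CA:
  assumes acc: "ACC_CA TYPE('a::cstar_algebra)"
  shows "sober (Sigma_star :: ('a set \<times> ('a \<Rightarrow> complex)) topology)"
proof (rule soberI_T0[OF T0_Sigma_star])
  fix S :: "('a set \<times> ('a \<Rightarrow> complex)) set"
  assume cl: "closedin Sigma_star S" and irr: "irreducible_in Sigma_star S"
  have SS: "S \<subseteq> Sigma_set" using closedin_subset[OF cl] by (simp add: topspace_Sigma_star)
  obtain p where "p \<in> S" using irr unfolding irreducible_in_def by blast
  then obtain M \<phi> where M\<phi>: "(M, \<phi>) \<in> S"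
    and maximal: "\<And>E \<nu>. (E, \<nu>) \<in> S \<Longrightarrow> M \<subseteq> E \<Longrightarrow> E = M"
    using ACC_CA_maximal_algebra[OF acc SS] by blast
  have "(M, \<phi>) \<in> topspace Sigma_star" using M\<phi> SS by (auto simp: topspace_Sigma_star)
  moreover have "S = Sigma_star closure_of {(M, \<phi>)}"
    using irreducible_in_Sigma_star_generic_point[OF cl irr M\<phi> maximal] .
  ultimately show "\<exists>x\<in>topspace Sigma_star. S = Sigma_star closure_of {x}" by blast
qed

section \<open>Finite-dimensional algebras\<close>

text \<open>In a finite-dimensional vector space every ascending chain of subspaces
  stabilises, since the dimensions are bounded and equal dimension of nested
  subspaces forces equality.\<close>
lemma (in finite_dimensional_vector_space) subspace_chain_stabilises:
  assumes sub: "\<And>n. subspace (V n)" and chain: "\<And>n. V n \<subseteq> V (Suc n)"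
  shows "\<exists>N. \<forall>n\<ge>N. V n = V N"
proof -
  let ?dims = "range (\<lambda>n. dim (V n))"
  have "?dims \<subseteq> {..dimension}" using dim_subset_UNIV by auto
  then have fin: "finite ?dims" by (rule finite_subset) simp
  have "Max ?dims \<in> ?dims" by (rule Max_in[OF fin]) simp
  then obtain N where N: "dim (V N) = Max ?dims" by (metis imageE)
  have "V N = V n" if "N \<le> n" for n
  proof (rule subspace_dim_equal[OF sub sub])
    show "V N \<subseteq> V n" using lift_Suc_mono_le[of V, OF chain that] .
    have "dim (V n) \<le> Max ?dims" using fin by (rule Max_ge) simp
    then show "dim (V n) \<le> dim (V N)" by (simp only: N)
  qed
  then show ?thesis by auto
qed

lemma (in vector_space) finite_dimensional_if_finite_span:
  assumes fin: "finite T" and sp: "UNIV \<subseteq> span T"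
  shows "\<exists>B. finite_dimensional_vector_space scale B"
proof -
  obtain B where B: "independent B" "UNIV \<subseteq> span B"
    using basis_exists[of UNIV] by metis
  have "finite B" using independent_span_bound[OF fin B(1)] sp by blast
  moreover have "span B = UNIV" using B(2) by blast
  ultimately have "finite_dimensional_vector_space scale B"
    using B(1) by (intro finite_dimensional_vector_space.intro vector_space_axioms
        finite_dimensional_vector_space_axioms.intro)
  then show ?thesis ..
qed

lemma vector_space_scaleC: "vector_space (scaleC :: complex \<Rightarrow> 'a::cstar_algebra \<Rightarrow> 'a)"
  by unfold_locales (simp_all add: scaleC_add_right scaleC_add_left scaleC_scaleC scaleC_one)

lemma subspace_comm_csubalg:
  assumes "comm_csubalg C"
  shows "module.subspace (scaleC :: complex \<Rightarrow> 'a::cstar_algebra \<Rightarrow> 'a) C"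
proof -
  interpret vector_space "scaleC :: complex \<Rightarrow> 'a \<Rightarrow> 'a" by (rule vector_space_scaleC)
  have "(0::'a) = scaleC 0 1" by simp
  then have "0 \<in> C" using assms unfolding comm_csubalg_def by metis
  then show ?thesis using assms unfolding comm_csubalg_def subspace_def by blast
qed

lemma ACC_CA_if_finite_dim:
  assumes fdim: "finite_dim_cstar TYPE('a::cstar_algebra)"
  shows "ACC_CA TYPE('a)"
proof -
  interpret vs: vector_space "scaleC :: complex \<Rightarrow> 'a \<Rightarrow> 'a" by (rule vector_space_scaleC)
  obtain T :: "'a set" where fin: "finite T" and sp: "\<forall>x. \<exists>c. x = (\<Sum>b\<in>T. scaleC (c b) b)"
    using fdim unfolding finite_dim_cstar_def by blast
  have "UNIV \<subseteq> vs.span T"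
  proof
    fix x :: 'a
    obtain c where "x = (\<Sum>b\<in>T. scaleC (c b) b)" using sp by blast
    also have "\<dots> \<in> vs.span T" by (intro vs.span_sum vs.span_scale vs.span_base)
    finally show "x \<in> vs.span T" .
  qed
  then obtain B where "finite_dimensional_vector_space (scaleC :: complex \<Rightarrow> 'a \<Rightarrow> 'a) B"
    using vs.finite_dimensional_if_finite_span[OF fin] by blast
  then interpret fd: finite_dimensional_vector_space "scaleC :: complex \<Rightarrow> 'a \<Rightarrow> 'a" B .
  show ?thesis
    unfolding ACC_CA_def
  proof (intro allI impI)
    fix V :: "nat \<Rightarrow> 'a set"
    assume "\<forall>n. comm_csubalg (V n) \<and> V n \<subseteq> V (Suc n)"
    then show "\<exists>N. \<forall>n\<ge>N. V n = V N"
      using subspace_comm_csubalg by (intro fd.subspace_chain_stabilises) blast+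
  qed
qed

theorem theorem2p25:
  shows "(ACC_CA TYPE('a::cstar_algebra) \<longrightarrow> sober (Sigma_star :: ('a set \<times> ('a \<Rightarrow> complex)) topology))
       \<and> (finite_dim_cstar TYPE('a) \<longrightarrow> sober (Sigma_star :: ('a set \<times> ('a \<Rightarrow> complex)) topology))"
  using sober_Sigma_star_if_ACC_CA ACC_CA_if_finite_dim by blast

end
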